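(* Let $f:\mathbb{R}^n\to\mathbb{R}$ be a continuously differentiable convex function, let $h:\mathbb{R}^n\to\mathbb{R}$ be a continuously differentiable strictly convex function, and assume $f$ is $L_h$-smooth relative to $h$ for some $L_h>0$, i.e. $L_h h - f$ is convex. Let $s$ be a positive integer, let $C_s=\{x\in\mathbb{R}^n: \|x\|_0\le s\}$, and let $x^*$ be an optimal solution of $\min\{f(x): x\in C_s\}$. Let $L>L_h$. Then $$x^*\in \operatorname*{argmin}_{y\in C_s}\ \nabla f(x^* )^T(y-x^* )+L\,D_h(y,x^* ).$$
   Context: $\|x\|_0$ denotes the number of nonzero entries of $x$. The Bregman distance generated by $h$ is $D_h(y,x)=h(y)-h(x)-\nabla h(x)^T(y-x)$. *)

theory Defs
  imports "HOL-Analysis.Analysis"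
begin

definition strictly_convex_on :: "'a::real_vector set \<Rightarrow> ('a \<Rightarrow> real) \<Rightarrow> bool" where
  "strictly_convex_on S f \<longleftrightarrow>
     (\<forall>x\<in>S. \<forall>y\<in>S. \<forall>u::real. x \<noteq> y \<and> 0 < u \<and> u < 1 \<longrightarrow>
        f (u *\<^sub>R x + (1 - u) *\<^sub>R y) < u * f x + (1 - u) * f y)"

definition l0 :: "real ^ 'n \<Rightarrow> nat" where
  "l0 x = card {i. x $ i \<noteq> 0}"

definition sparse_set :: "nat \<Rightarrow> (real ^ 'n) set" where
  "sparse_set s = {x. l0 x \<le> s}"

definition bregman :: "('a::real_inner \<Rightarrow> real) \<Rightarrow> ('a \<Rightarrow> 'a) \<Rightarrow> 'a \<Rightarrow> 'a \<Rightarrow> real" where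
  "bregman h gh y x = h y - h x - inner (gh x) (y - x)"

definition argmin_on :: "'a set \<Rightarrow> ('a \<Rightarrow> real) \<Rightarrow> 'a set" where
  "argmin_on S g = {x \<in> S. \<forall>y\<in>S. g x \<le> g y}"

end

theory Submission
  imports Defs
begin

text \<open>Relative smoothness says that the model
  \<open>f x\<^sup>* + \<nabla>f(x\<^sup>*)\<^sup>T(y - x\<^sup>*) + L D\<^sub>h(y, x\<^sup>*)\<close> majorizes \<open>f\<close> once \<open>L \<ge> L\<^sub>h\<close>: the tangent
  inequality for the convex function \<open>L\<^sub>h h - f\<close> gives the bound with \<open>L\<^sub>h\<close>, and convexity of
  \<open>h\<close> makes \<open>D\<^sub>h\<close> nonnegative, so \<open>L\<^sub>h\<close> may be raised to \<open>L\<close>. The model touches \<open>f\<close> at \<open>x\<^sup>*\<close>,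
  so any minimizer of \<open>f\<close> over \<open>C\<^sub>s\<close> also minimizes the model over \<open>C\<^sub>s\<close>.\<close>

lemma strictly_convex_on_imp_convex_on:
  assumes "convex S" and "strictly_convex_on S f"
  shows "convex_on S f"
proof (rule convex_onI[OF _ assms(1)])
  fix t :: real and x y
  assume t: "0 < t" "t < 1" and xy: "x \<in> S" "y \<in> S"
  show "f ((1 - t) *\<^sub>R x + t *\<^sub>R y) \<le> (1 - t) * f x + t * f y"
  proof (cases "x = y")
    case True
    then show ?thesis by (simp add: algebra_simps flip: scaleR_add_left)
  next
    case False
    with t xy show ?thesis
      using assms(2)[unfolded strictly_convex_on_def, rule_format, of x y "1 - t"] by simp
  qed
qed

lemma convex_on_restrict_line:
  assumes "convex_on UNIV f"
  shows "convex_on UNIV (\<lambda>t::real. f (x + t *\<^sub>R v))"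
proof (rule convex_onI)
  fix u a b :: real
  assume "0 < u" "u < 1"
  have "x + ((1 - u) * a + u * b) *\<^sub>R v = (1 - u) *\<^sub>R (x + a *\<^sub>R v) + u *\<^sub>R (x + b *\<^sub>R v)"
    by (simp add: algebra_simps)
  then show "f (x + ((1 - u) *\<^sub>R a + u *\<^sub>R b) *\<^sub>R v) \<le> (1 - u) * f (x + a *\<^sub>R v) + u * f (x + b *\<^sub>R v)"
    using convex_onD[OF assms, of u] \<open>0 < u\<close> \<open>u < 1\<close> by simp
qed simp

lemma convex_on_above_tangent:
  fixes f :: "'a::real_normed_vector \<Rightarrow> real"
  assumes convex: "convex_on UNIV f" and deriv: "(f has_derivative D) (at x)"
  shows "f x + D (y - x) \<le> f y"
proof -
  define g where "g t = f (x + t *\<^sub>R (y - x))" for t :: real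
  have "((\<lambda>t. x + t *\<^sub>R (y - x)) has_derivative (\<lambda>t. t *\<^sub>R (y - x))) (at 0)"
    by (auto intro!: derivative_eq_intros)
  from has_derivative_compose[OF this, where g = f and g' = D] deriv
  have "(g has_derivative (\<lambda>t. D (t *\<^sub>R (y - x)))) (at 0)"
    by (simp add: g_def[abs_def])
  moreover have "(\<lambda>t. D (t *\<^sub>R (y - x))) = (\<lambda>t. D (y - x) * t)"
    using has_derivative_linear[OF deriv] by (simp add: linear_scale mult.commute)
  ultimately have "(g has_field_derivative D (y - x)) (at 0)"
    by (simp add: has_field_derivative_def)
  with convex_on_restrict_line[OF convex, of x "y - x"]
  have "D (y - x) * (1 - 0) \<le> g 1 - g 0"
    unfolding g_def by (intro convex_on_imp_above_tangent) auto
  then show ?thesis by (simp add: g_def)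
qed

lemma bregman_self [simp]: "bregman h gh x x = 0"
  by (simp add: bregman_def)

lemma bregman_nonneg:
  assumes "convex_on UNIV h" and "(h has_derivative (\<lambda>d. inner (gh x) d)) (at x)"
  shows "0 \<le> bregman h gh y x"
  using convex_on_above_tangent[OF assms, of y] by (simp add: bregman_def)

lemma relatively_smooth_upper_bound:
  fixes f h :: "'a::real_inner \<Rightarrow> real"
  assumes smooth: "convex_on UNIV (\<lambda>x. Lh * h x - f x)"
    and f_deriv: "(f has_derivative (\<lambda>d. inner (gf x) d)) (at x)"
    and h_deriv: "(h has_derivative (\<lambda>d. inner (gh x) d)) (at x)"
  shows "f y \<le> f x + inner (gf x) (y - x) + Lh * bregman h gh y x"
proof -
  have "((\<lambda>x. Lh * h x - f x) has_derivative (\<lambda>d. Lh * inner (gh x) d - inner (gf x) d)) (at x)"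
    using f_deriv h_deriv by (auto intro!: derivative_eq_intros)
  from convex_on_above_tangent[OF smooth this, of y] show ?thesis
    by (simp add: bregman_def algebra_simps)
qed

lemma argmin_on_majorant:
  assumes "x \<in> argmin_on S f" and "\<And>y. y \<in> S \<Longrightarrow> f y \<le> g y" and "g x = f x"
  shows "x \<in> argmin_on S g"
  using assms unfolding argmin_on_def by force

lemma argmin_on_add_const: "argmin_on S (\<lambda>y. g y + c) = argmin_on S g"
  by (simp add: argmin_on_def)

theorem lemma3p2:
  fixes f h :: "real ^ 'n \<Rightarrow> real"
    and gf gh :: "real ^ 'n \<Rightarrow> real ^ 'n"
    and Lh L :: real and s :: nat and xstar :: "real ^ 'n"
  assumes f_deriv: "\<And>x. (f has_derivative (\<lambda>d. inner (gf x) d)) (at x)"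
    and gf_cont: "continuous_on UNIV gf"
    and h_deriv: "\<And>x. (h has_derivative (\<lambda>d. inner (gh x) d)) (at x)"
    and gh_cont: "continuous_on UNIV gh"
    and f_convex: "convex_on UNIV f"
    and h_strict: "strictly_convex_on UNIV h"
    and Lh_pos: "Lh > 0"
    and rel_smooth: "convex_on UNIV (\<lambda>x. Lh * h x - f x)"
    and s_pos: "s \<ge> 1"
    and opt: "xstar \<in> argmin_on (sparse_set s) f"
    and L_gt: "L > Lh"
  shows "xstar \<in> argmin_on (sparse_set s)
           (\<lambda>y. inner (gf xstar) (y - xstar) + L * bregman h gh y xstar)"
proof -
  define model where
    "model = (\<lambda>y. inner (gf xstar) (y - xstar) + L * bregman h gh y xstar + f xstar)"
  have majorant: "f y \<le> model y" for y
  proof -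
    have "0 \<le> bregman h gh y xstar"
      using bregman_nonneg[where gh = gh, OF strictly_convex_on_imp_convex_on[OF convex_UNIV h_strict]
          h_deriv] .
    then have "Lh * bregman h gh y xstar \<le> L * bregman h gh y xstar"
      using L_gt by (simp add: mult_right_mono)
    with relatively_smooth_upper_bound[where gf = gf and gh = gh and x = xstar and y = y,
        OF rel_smooth f_deriv h_deriv]
    show ?thesis by (simp add: model_def)
  qed
  have "xstar \<in> argmin_on (sparse_set s) model"
    using argmin_on_majorant[OF opt majorant] by (simp add: model_def)
  then show ?thesis
    unfolding model_def argmin_on_add_const .
qed

end
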